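(* For every $n\ge 2$, under the Yule model, $$E_Y(D_n)=2n(n+1)\sum_{i=2}^n\frac1i-2n(n-1).$$
   Context: $\mathcal{BT}_n$ is the set of binary phylogenetic trees with leaves bijectively labeled by $\{1,\dots,n\}$ (rooted, every internal node with exactly two children). For leaves $i,j$ of $T$, the nodal distance $d_T(i,j)$ is the number of edges of the undirected path between them, and the total area is $D(T)=\sum_{1\le i<j\le n}d_T(i,j)$. $D_n$ is $D(T)$ for random $T\in\mathcal{BT}_n$. Under the Yule model $T$ has probability $P_Y(T)=\frac{2^{n-1}}{n!}\prod_{v\in V_{int}(T)}\frac{1}{\kappa_T(v)-1}$, with $V_{int}(T)$ the internal nodes and $\kappa_T(v)$ the number of leaves below $v$; $E_Y$ denotes expectation under it. *)

theory Defs
  imports Complex_Main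
begin

text \<open>A phylogenetic tree is unordered;
  we represent each one by its unique canonical ordered representative, in which
  for every internal node the smallest leaf label of the left subtree is smaller
  than the smallest leaf label of the right subtree.\<close>

datatype ltree = Leaf nat | Node ltree ltree

fun leaves :: "ltree \<Rightarrow> nat list" where
  "leaves (Leaf a) = [a]"
| "leaves (Node l r) = leaves l @ leaves r"

fun canonical :: "ltree \<Rightarrow> bool" where
  "canonical (Leaf a) = True"
| "canonical (Node l r) =
     (canonical l \<and> canonical r \<and> Min (set (leaves l)) < Min (set (leaves r)))"

definition BT :: "nat \<Rightarrow> ltree set" where
  "BT n = {t. distinct (leaves t) \<and> set (leaves t) = {1..n} \<and> canonical t}"

fun depth :: "ltree \<Rightarrow> nat \<Rightarrow> nat" where
  "depth (Leaf a) i = 0"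
| "depth (Node l r) i =
     (if i \<in> set (leaves l) then depth l i + 1 else depth r i + 1)"

fun nodal_dist :: "ltree \<Rightarrow> nat \<Rightarrow> nat \<Rightarrow> nat" where
  "nodal_dist (Leaf a) i j = 0"
| "nodal_dist (Node l r) i j =
     (if i \<in> set (leaves l) \<and> j \<in> set (leaves l) then nodal_dist l i j
      else if i \<in> set (leaves r) \<and> j \<in> set (leaves r) then nodal_dist r i j
      else depth (Node l r) i + depth (Node l r) j)"

definition total_area :: "nat \<Rightarrow> ltree \<Rightarrow> real" where
  "total_area n t = (\<Sum>i\<in>{1..n}. \<Sum>j\<in>{i<..n}. real (nodal_dist t i j))"

fun int_prod :: "ltree \<Rightarrow> real" where
  "int_prod (Leaf a) = 1"
| "int_prod (Node l r) =
     (1 / (real (length (leaves (Node l r))) - 1)) * int_prod l * int_prod r"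

definition yule_prob :: "nat \<Rightarrow> ltree \<Rightarrow> real" where
  "yule_prob n t = 2 ^ (n - 1) / fact n * int_prod t"

definition expected_area_yule :: "nat \<Rightarrow> real" where
  "expected_area_yule n = (\<Sum>t\<in>BT n. yule_prob n t * total_area n t)"

end

theory Submission
  imports Defs "HOL-Analysis.Harmonic_Numbers"
begin

(* We work with trees on an arbitrary finite leaf set S instead of {1..n}.  Every tree with at
   least two leaves is a node whose left subtree carries a "split" A of S (a proper subset
   containing Min S) and whose right subtree carries S - A; this gives a bijective decomposition
   of sums over trees.  Two statistics obey simple recursions along it: the Sackin index
   (total leaf depth) and the sum of nodal distances over ordered pairs of leaves.

   For the Yule weight int_prod we study the weighted sums of 1, of the Sackin index and of the
   pair distance sum.  The splits of size k carry total relative weight 2k/(n(n-1)), which turns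
   the decomposition into one-dimensional recurrences in n.  By strong induction on card S the
   three weighted sums equal fact n / 2^(n-1) times 1, 2n(H_n - 1) and 4n(n+1)H_n - 8n^2, the
   closed forms being checked against the recurrences by elementary summation identities.  Since
   D(T) is half the ordered pair distance sum, the theorem follows. *)

section \<open>Summation identities involving harmonic numbers\<close>

lemma sum_id_real: "(\<Sum>k=1..m. real k) = real m * (real m + 1) / 2"
  by (induction m) (simp_all add: field_simps)

lemma sum_cube_real: "(\<Sum>k=1..m. real k ^ 3) = (real m * (real m + 1) / 2) ^ 2"
  by (induction m) (simp_all add: field_simps power2_eq_square power3_eq_cube)

lemma sum_mult_harm:
  "(\<Sum>k=1..m. real k * harm k) = real m * (real m + 1) / 2 * harm m - real m * (real m - 1) / 4"
proof (induction m)
  case (Suc m)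
  have "(\<Sum>k=1..Suc m. real k * harm k) = (\<Sum>k=1..m. real k * harm k) + real (Suc m) * harm (Suc m)"
    by simp
  also have "\<dots> = real m * (real m + 1) / 2 * harm m - real m * (real m - 1) / 4
                   + real (Suc m) * harm (Suc m)"
    using Suc.IH by simp
  finally show ?case by (simp add: harm_Suc field_simps)
qed simp

lemma sum_reflect: "(\<Sum>k=1..m. f (Suc m - k)) = (\<Sum>k=1..m. (f k :: real))"
  using sum.atLeastAtMost_rev[of f 1 m] by simp

text \<open>The expected Sackin index and the expected ordered pair distance sum of a Yule tree
  with k leaves.\<close>
definition sackin_mean :: "nat \<Rightarrow> real" where
  "sackin_mean k = 2 * real k * (harm k - 1)"

definition dist_mean :: "nat \<Rightarrow> real" where
  "dist_mean k = 4 * real k * (real k + 1) * harm k - 8 * real k ^ 2"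

text \<open>The closed forms satisfy the recurrences produced by the split decomposition
  (left subtree of size k is chosen with probability proportional to k).\<close>
lemma sackin_mean_recurrence:
  "(\<Sum>k=1..m. real k * (sackin_mean k + sackin_mean (Suc m - k) + real (Suc m)))
   = real (Suc m) * real m / 2 * sackin_mean (Suc m)"
proof -
  have reflected: "(\<Sum>k=1..m. real k * sackin_mean (Suc m - k))
                 = (\<Sum>k=1..m. real (Suc m - k) * sackin_mean k)"
    using sum_reflect[of "\<lambda>k. real (Suc m - k) * sackin_mean k" m]
    by (simp add: sum.cong[of "{1..m}"])
  have "(\<Sum>k=1..m. real k * (sackin_mean k + sackin_mean (Suc m - k) + real (Suc m)))
      = (\<Sum>k=1..m. real k * sackin_mean k) + (\<Sum>k=1..m. real (Suc m - k) * sackin_mean k)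
        + real (Suc m) * (\<Sum>k=1..m. real k)"
    unfolding reflected[symmetric] by (simp add: sum.distrib sum_distrib_left algebra_simps)
  also have "\<dots> = (\<Sum>k=1..m. real (Suc m) * sackin_mean k) + real (Suc m) * (\<Sum>k=1..m. real k)"
    by (simp add: sum.distrib[symmetric] algebra_simps of_nat_diff)
  also have "\<dots> = real (Suc m) * (2 * (\<Sum>k=1..m. real k * harm k) - 2 * (\<Sum>k=1..m. real k))
                 + real (Suc m) * (\<Sum>k=1..m. real k)"
    by (simp add: sackin_mean_def sum_distrib_left sum_subtractf algebra_simps)
  also have "\<dots> = real (Suc m) * real m / 2 * sackin_mean (Suc m)"
    unfolding sum_mult_harm sum_id_real by (simp add: sackin_mean_def harm_Suc field_simps)
  finally show ?thesis .
qed

lemma dist_mean_recurrence: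
  "(\<Sum>k=1..m. real k * (dist_mean k + dist_mean (Suc m - k) + 2 * real (Suc m - k) * sackin_mean k
      + 2 * real k * sackin_mean (Suc m - k) + 4 * real k * real (Suc m - k)))
   = real (Suc m) * real m / 2 * dist_mean (Suc m)"
proof -
  define n where "n = Suc m"
  txt \<open>G collects the terms depending on the size n - k of the right subtree; reflecting
    them turns the whole summand into an explicit function of k.\<close>
  define G where "G j = real (n - j) * dist_mean j + 2 * real (n - j) ^ 2 * sackin_mean j" for j
  have "(\<Sum>k=1..m. real k * (dist_mean k + dist_mean (Suc m - k) + 2 * real (Suc m - k) * sackin_mean k
      + 2 * real k * sackin_mean (Suc m - k) + 4 * real k * real (Suc m - k)))
     = (\<Sum>k=1..m. (real k * dist_mean k + 2 * real k * real (n - k) * sackin_mean k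
                   + 4 * real k ^ 2 * real (n - k)) + G (Suc m - k))"
    by (rule sum.cong) (auto simp: G_def n_def algebra_simps power2_eq_square)
  also have "\<dots> = (\<Sum>k=1..m. real k * dist_mean k + 2 * real k * real (n - k) * sackin_mean k
                   + 4 * real k ^ 2 * real (n - k)) + (\<Sum>k=1..m. G k)"
    by (simp only: sum.distrib sum_reflect)
  also have "\<dots> = (\<Sum>k=1..m. 4 * real n * (real n + 1) * (real k * harm k)
                   - 4 * real n ^ 2 * real k - 4 * real k ^ 3)"
    by (simp add: sum.distrib[symmetric], rule sum.cong)
       (auto simp: G_def n_def sackin_mean_def dist_mean_def of_nat_diff algebra_simps
          power2_eq_square power3_eq_cube)
  also have "\<dots> = 4 * real n * (real n + 1) * (\<Sum>k=1..m. real k * harm k)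
                 - 4 * real n ^ 2 * (\<Sum>k=1..m. real k) - 4 * (\<Sum>k=1..m. real k ^ 3)"
    by (simp add: sum_subtractf sum_distrib_left)
  also have "\<dots> = real (Suc m) * real m / 2 * dist_mean (Suc m)"
    unfolding sum_mult_harm sum_id_real sum_cube_real n_def
    by (simp add: dist_mean_def harm_Suc field_simps power2_eq_square)
  finally show ?thesis .
qed

section \<open>Trees on an arbitrary leaf set and their root decomposition\<close>

definition BTs :: "nat set \<Rightarrow> ltree set" where
  "BTs S = {t. distinct (leaves t) \<and> set (leaves t) = S \<and> canonical t}"

text \<open>Possible leaf sets of the left subtree at the root of a canonical tree on S.\<close>
definition Splits :: "nat set \<Rightarrow> nat set set" where
  "Splits S = {A. A \<subseteq> S \<and> Min S \<in> A \<and> A \<noteq> S}"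

lemma leaves_nonempty: "leaves t \<noteq> []"
  by (induction t) auto

lemma BTs_empty: "BTs {} = {}"
  using leaves_nonempty by (auto simp: BTs_def)

lemma BTs_singleton: "BTs {a} = {Leaf a}"
proof (rule set_eqI)
  fix t
  show "t \<in> BTs {a} \<longleftrightarrow> t \<in> {Leaf a}"
  proof (cases t)
    case (Node l r)
    have "length (leaves t) \<ge> 2"
      using Node leaves_nonempty[of l] leaves_nonempty[of r]
      by (cases "leaves l"; cases "leaves r") auto
    moreover have "t \<in> BTs {a} \<Longrightarrow> length (leaves t) = 1"
      using distinct_card by (fastforce simp: BTs_def)
    ultimately show ?thesis using Node by auto
  qed (auto simp: BTs_def)
qed

lemma finite_Splits: "finite S \<Longrightarrow> finite (Splits S)"
  unfolding Splits_def by (rule finite_subset[of _ "Pow S"]) auto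

lemma Splits_card:
  assumes "finite S" and "A \<in> Splits S"
  shows "finite A" "1 \<le> card A" "card A < card S" "card (S - A) = card S - card A"
proof -
  have AS: "A \<subseteq> S" "Min S \<in> A" "A \<noteq> S" using assms(2) by (auto simp: Splits_def)
  show fA: "finite A" using AS assms(1) finite_subset by blast
  show "1 \<le> card A" using AS fA by (simp add: Suc_le_eq card_gt_0_iff) blast
  show "card A < card S" using psubset_card_mono[of S A] AS assms(1) by blast
  show "card (S - A) = card S - card A" using card_Diff_subset[OF fA AS(1)] .
qed

lemma BTs_decompose:
  assumes S: "finite S" "2 \<le> card S"
  shows "BTs S = (\<lambda>(A,l,r). Node l r) ` (SIGMA A:Splits S. BTs A \<times> BTs (S - A))"
proof (rule set_eqI, rule iffI)
  fix t assume t: "t \<in> BTs S"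
  show "t \<in> (\<lambda>(A,l,r). Node l r) ` (SIGMA A:Splits S. BTs A \<times> BTs (S - A))"
  proof (cases t)
    case (Leaf a)
    with t S show ?thesis by (auto simp: BTs_def)
  next
    case (Node l r)
    define A where "A = set (leaves l)"
    from t Node have d: "distinct (leaves l)" "distinct (leaves r)" "A \<inter> set (leaves r) = {}"
      and u: "A \<union> set (leaves r) = S"
      and c: "canonical l" "canonical r" "Min A < Min (set (leaves r))"
      by (auto simp: BTs_def A_def)
    have rS: "set (leaves r) = S - A" using d u by auto
    have ne: "A \<noteq> {}" "set (leaves r) \<noteq> {}" using leaves_nonempty A_def by auto
    have "Min S = min (Min A) (Min (set (leaves r)))"
      using u[symmetric] Min_Un[of A "set (leaves r)"] ne A_def by simp
    then have "Min S \<in> A" using c Min_in[of A] ne A_def by simp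
    then have "A \<in> Splits S" using u rS ne by (auto simp: Splits_def)
    moreover have "l \<in> BTs A" "r \<in> BTs (S - A)" using d c rS by (simp_all add: BTs_def A_def)
    ultimately show ?thesis using Node by (auto intro!: image_eqI[where x="(A,l,r)"])
  qed
next
  fix t assume "t \<in> (\<lambda>(A,l,r). Node l r) ` (SIGMA A:Splits S. BTs A \<times> BTs (S - A))"
  then obtain A l r where t: "t = Node l r" and A: "A \<in> Splits S"
    and l: "l \<in> BTs A" and r: "r \<in> BTs (S - A)"
    by auto
  have AS: "A \<subseteq> S" "Min S \<in> A" "A \<noteq> S" using A by (auto simp: Splits_def)
  have fA: "finite A" using Splits_card[OF S(1) A] by simp
  have "Min A = Min S"
  proof (rule antisym)
    show "Min A \<le> Min S" using AS fA by simp
    have "Min A \<in> S" using Min_in[OF fA] AS by auto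
    then show "Min S \<le> Min A" using S(1) by simp
  qed
  moreover have "Min (S - A) \<in> S - A" using Min_in[of "S - A"] AS S(1) by auto
  then have "Min S < Min (S - A)"
    using AS S(1) by (metis DiffD1 DiffD2 Min_le order_le_less)
  ultimately show "t \<in> BTs S" using l r AS by (auto simp: BTs_def t)
qed

lemma finite_BTs: "finite S \<Longrightarrow> finite (BTs S)"
proof (induction "card S" arbitrary: S rule: less_induct)
  case less
  show ?case
  proof (cases "card S \<ge> 2")
    case True
    have "finite (BTs A \<times> BTs (S - A))" if A: "A \<in> Splits S" for A
      using less.hyps[of A] less.hyps[of "S - A"] Splits_card[OF less.prems A] less.prems by simp
    then show ?thesis
      using BTs_decompose[OF less.prems True] finite_Splits[OF less.prems] by auto
  next
    case False
    then have "card S = 0 \<or> card S = 1" by auto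
    then show ?thesis using less.prems by (auto simp: card_1_singleton_iff BTs_empty BTs_singleton)
  qed
qed

lemma sum_BTs_decompose:
  assumes "finite S" "2 \<le> card S"
  shows "(\<Sum>t\<in>BTs S. f t) = (\<Sum>A\<in>Splits S. \<Sum>l\<in>BTs A. \<Sum>r\<in>BTs (S - A). f (Node l r))"
proof -
  have inj: "inj_on (\<lambda>(A,l,r). Node l r) (SIGMA A:Splits S. BTs A \<times> BTs (S - A))"
    by (auto simp: inj_on_def BTs_def)
  have fin: "finite (BTs A \<times> BTs (S - A))" if "A \<in> Splits S" for A
    using assms(1) Splits_card[OF assms(1) that] by (auto intro!: finite_BTs)
  have "(\<Sum>t\<in>BTs S. f t)
        = (\<Sum>x\<in>(SIGMA A:Splits S. BTs A \<times> BTs (S - A)). f ((\<lambda>(A,l,r). Node l r) x))"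
    unfolding BTs_decompose[OF assms] by (rule sum.reindex[OF inj, unfolded comp_def])
  also have "\<dots> = (\<Sum>(A,p)\<in>(SIGMA A:Splits S. BTs A \<times> BTs (S - A)). f (Node (fst p) (snd p)))"
    by (rule sum.cong) auto
  also have "\<dots> = (\<Sum>A\<in>Splits S. \<Sum>p\<in>BTs A \<times> BTs (S - A). f (Node (fst p) (snd p)))"
    by (rule sum.Sigma[symmetric]) (auto simp: finite_Splits assms fin)
  also have "\<dots> = (\<Sum>A\<in>Splits S. \<Sum>l\<in>BTs A. \<Sum>r\<in>BTs (S - A). f (Node l r))"
    by (simp add: sum.cartesian_product split_beta)
  finally show ?thesis .
qed

lemma node_over_split:
  assumes "finite S" "A \<in> Splits S" "l \<in> BTs A" "r \<in> BTs (S - A)"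
  shows "distinct (leaves (Node l r))" "set (leaves l) = A" "set (leaves r) = S - A"
    "length (leaves (Node l r)) = card S"
proof -
  show d: "distinct (leaves (Node l r))" "set (leaves l) = A" "set (leaves r) = S - A"
    using assms(3,4) by (auto simp: BTs_def)
  have "set (leaves (Node l r)) = S" using d(2,3) assms(2) by (auto simp: Splits_def)
  then show "length (leaves (Node l r)) = card S" using distinct_card[OF d(1)] by simp
qed

text \<open>A split is Min S together with a proper subset of the remaining m elements; there are
  m choose (k - 1) splits of size k.\<close>
lemma sum_Splits_by_card:
  assumes S: "finite S" "card S = Suc m"
  shows "(\<Sum>A\<in>Splits S. h (card A)) = (\<Sum>k=1..m. real (m choose (k - 1)) * (h k :: real))"
proof -
  define a where "a = Min S"
  define T where "T = S - {a}"
  have "S \<noteq> {}" using S(2) by auto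
  then have aS: "a \<in> S" using Min_in[OF S(1)] a_def by auto
  have fT: "finite T" and cT: "card T = m" and aT: "a \<notin> T" using S aS by (auto simp: T_def)
  have splits: "Splits S = insert a ` (Pow T - {T})"
  proof (rule set_eqI, rule iffI)
    fix A assume "A \<in> Splits S"
    then have "A - {a} \<in> Pow T - {T}" "A = insert a (A - {a})"
      using aS by (auto simp: Splits_def a_def T_def)
    then show "A \<in> insert a ` (Pow T - {T})" by blast
  next
    fix A assume "A \<in> insert a ` (Pow T - {T})"
    then obtain B where B: "B \<subseteq> T" "B \<noteq> T" "A = insert a B" by auto
    then have "A \<noteq> S" using aT aS by (auto simp: T_def)
    then show "A \<in> Splits S" using B aS by (auto simp: Splits_def a_def T_def)
  qed
  have inj: "inj_on (insert a) (Pow T - {T})"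
    using aT by (auto simp: inj_on_def)
  have card_insert: "card (insert a B) = Suc (card B)" if "B \<in> Pow T - {T}" for B
  proof -
    have "finite B" "a \<notin> B" using that aT fT finite_subset by auto
    then show ?thesis by simp
  qed
  have sizes: "card ` (Pow T - {T}) \<subseteq> {0..<m}"
  proof
    fix x assume "x \<in> card ` (Pow T - {T})"
    then obtain B where "B \<subset> T" "x = card B" by auto
    then show "x \<in> {0..<m}" using fT cT psubset_card_mono by auto
  qed
  have "(\<Sum>A\<in>Splits S. h (card A)) = (\<Sum>B\<in>Pow T - {T}. h (Suc (card B)))"
    unfolding splits by (simp add: sum.reindex[OF inj] card_insert)
  also have "\<dots> = (\<Sum>j\<in>{0..<m}. \<Sum>B\<in>{B \<in> Pow T - {T}. card B = j}. h (Suc (card B)))"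
    by (rule sum.group[symmetric]) (use fT sizes in auto)
  also have "\<dots> = (\<Sum>j\<in>{0..<m}. real (m choose j) * h (Suc j))"
  proof (rule sum.cong[OF refl])
    fix j assume "j \<in> {0..<m}"
    then have "{B \<in> Pow T - {T}. card B = j} = {B. B \<subseteq> T \<and> card B = j}" using cT by auto
    then show "(\<Sum>B\<in>{B \<in> Pow T - {T}. card B = j}. h (Suc (card B))) = real (m choose j) * h (Suc j)"
      using n_subsets[OF fT, of j] cT by simp
  qed
  also have "\<dots> = (\<Sum>k\<in>Suc ` {0..<m}. real (m choose (k - 1)) * h k)"
    by (subst sum.reindex) auto
  also have "Suc ` {0..<m} = {1..m}" by auto
  finally show ?thesis .
qed

section \<open>Recursions for the Sackin index and the pair distance sum\<close>

definition sackin :: "ltree \<Rightarrow> nat" where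
  "sackin t = (\<Sum>i\<in>set (leaves t). depth t i)"

definition pair_dist :: "ltree \<Rightarrow> nat" where
  "pair_dist t = (\<Sum>i\<in>set (leaves t). \<Sum>j\<in>set (leaves t). nodal_dist t i j)"

lemma sackin_Node:
  assumes "distinct (leaves (Node l r))"
  shows "sackin (Node l r) = sackin l + sackin r + card (set (leaves l)) + card (set (leaves r))"
proof -
  let ?L = "set (leaves l)" and ?R = "set (leaves r)"
  have dj: "?L \<inter> ?R = {}" using assms by simp
  have "sackin (Node l r) = (\<Sum>i\<in>?L. depth (Node l r) i) + (\<Sum>i\<in>?R. depth (Node l r) i)"
    unfolding sackin_def by (simp add: sum.union_disjoint dj)
  also have "(\<Sum>i\<in>?L. depth (Node l r) i) = (\<Sum>i\<in>?L. depth l i + 1)" by (rule sum.cong) auto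
  also have "(\<Sum>i\<in>?R. depth (Node l r) i) = (\<Sum>i\<in>?R. depth r i + 1)"
    by (rule sum.cong) (use dj in auto)
  finally show ?thesis by (simp add: sum_Suc sackin_def)
qed

text \<open>Each cross pair (i,j) with i left, j right has distance (depth l i + 1) + (depth r j + 1).\<close>
lemma sum_cross_distances:
  "(\<Sum>i\<in>A. \<Sum>j\<in>B. f i + 1 + (g j + 1))
   = card B * (sum f A + card A) + card A * (sum g B + card B)"
proof -
  have "(\<Sum>j\<in>B. f i + 1 + (g j + 1)) = card B * (f i + 2) + sum g B" for i
    by (simp add: sum.distrib sum_Suc algebra_simps)
  then show ?thesis by (simp add: sum.distrib sum_Suc algebra_simps sum_distrib_left sum_distrib_right)
qed

lemma pair_dist_Node:
  assumes "distinct (leaves (Node l r))"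
  shows "pair_dist (Node l r) = pair_dist l + pair_dist r
           + 2 * (card (set (leaves r)) * (sackin l + card (set (leaves l)))
                + card (set (leaves l)) * (sackin r + card (set (leaves r))))"
proof -
  let ?L = "set (leaves l)" and ?R = "set (leaves r)" and ?t = "Node l r"
  have dj: "?L \<inter> ?R = {}" using assms by simp
  have "pair_dist ?t = (\<Sum>i\<in>?L. (\<Sum>j\<in>?L. nodal_dist ?t i j) + (\<Sum>j\<in>?R. nodal_dist ?t i j))
      + (\<Sum>i\<in>?R. (\<Sum>j\<in>?L. nodal_dist ?t i j) + (\<Sum>j\<in>?R. nodal_dist ?t i j))"
    unfolding pair_dist_def by (simp add: sum.union_disjoint dj)
  also have "\<dots> = (\<Sum>i\<in>?L. (\<Sum>j\<in>?L. nodal_dist l i j) + (\<Sum>j\<in>?R. depth l i + 1 + (depth r j + 1)))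
      + (\<Sum>i\<in>?R. (\<Sum>j\<in>?L. depth r i + 1 + (depth l j + 1)) + (\<Sum>j\<in>?R. nodal_dist r i j))"
    using dj by (intro arg_cong2[where f="(+)"] sum.cong refl) auto
  also have "\<dots> = pair_dist l + pair_dist r
      + 2 * (card ?R * (sackin l + card ?L) + card ?L * (sackin r + card ?R))"
    using sum_cross_distances[where A="?L" and B="?R" and f="depth l" and g="depth r"]
      sum_cross_distances[where A="?R" and B="?L" and f="depth r" and g="depth l"]
    by (simp add: pair_dist_def sackin_def sum.distrib)
  finally show ?thesis .
qed

section \<open>Yule-weighted sums\<close>

definition yule_sum :: "(ltree \<Rightarrow> real) \<Rightarrow> nat set \<Rightarrow> real" where
  "yule_sum f S = (\<Sum>t\<in>BTs S. int_prod t * f t)"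

text \<open>Reciprocal of the Yule normalizing constant: the total weight of all trees with k leaves.\<close>
definition yule_norm :: "nat \<Rightarrow> real" where
  "yule_norm k = fact k / 2 ^ (k - 1)"

lemma yule_sum_decompose:
  assumes "finite S" "2 \<le> card S"
  shows "yule_sum f S = (\<Sum>A\<in>Splits S. \<Sum>l\<in>BTs A. \<Sum>r\<in>BTs (S - A).
                            int_prod l * int_prod r * f (Node l r)) / (real (card S) - 1)"
  unfolding yule_sum_def sum_BTs_decompose[OF assms] sum_divide_distrib
proof (intro sum.cong refl)
  fix A l r assume "A \<in> Splits S" "l \<in> BTs A" "r \<in> BTs (S - A)"
  then have "length (leaves (Node l r)) = card S" using node_over_split[OF assms(1)] by blast
  then show "int_prod (Node l r) * f (Node l r)
             = int_prod l * int_prod r * f (Node l r) / (real (card S) - 1)"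
    by (simp only: int_prod.simps) simp
qed

text \<open>Weight of the splits of size k relative to the whole: 2k/(m+1), up to the factor
  1/m from the root.\<close>
lemma yule_norm_split:
  assumes "1 \<le> k" "k \<le> m"
  shows "real (m choose (k - 1)) * yule_norm k * yule_norm (Suc m - k)
         = yule_norm (Suc m) * (2 * real k / real (Suc m))"
proof -
  define j where "j = k - 1"
  define i where "i = m - k"
  have k: "k = Suc j" and m: "m = j + Suc i" using assms by (simp_all add: j_def i_def)
  have "fact j * fact (Suc i) * (m choose j) = (fact m :: nat)"
    using binomial_fact_lemma[of j m] m by simp
  then have binom: "fact j * fact (Suc i) * real (m choose j) = fact m"
    by (metis of_nat_fact of_nat_mult)
  have "real (m choose (k - 1)) * yule_norm k * yule_norm (Suc m - k)
      = (fact j * fact (Suc i) * real (m choose j)) * real (Suc j) / (2 ^ j * 2 ^ i)"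
    by (simp add: yule_norm_def k m Suc_diff_le)
  also have "\<dots> = fact (Suc m) / (2 ^ j * 2 ^ i * 2) * (2 * real k / real (Suc m))"
    unfolding binom by (simp add: k field_simps del: of_nat_Suc)
  also have "\<dots> = yule_norm (Suc m) * (2 * real k / real (Suc m))"
    by (simp add: yule_norm_def m power_add)
  finally show ?thesis .
qed

lemma yule_sum_average:
  assumes S: "finite S" "card S = Suc m" "1 \<le> m"
    and pairs: "\<And>A. A \<in> Splits S \<Longrightarrow>
        (\<Sum>l\<in>BTs A. \<Sum>r\<in>BTs (S - A). int_prod l * int_prod r * f (Node l r))
        = yule_norm (card A) * yule_norm (Suc m - card A) * g (card A)"
  shows "yule_sum f S = yule_norm (Suc m) * (2 / (real (Suc m) * real m)) * (\<Sum>k=1..m. real k * g k)"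
proof -
  have "yule_sum f S = (\<Sum>A\<in>Splits S. yule_norm (card A) * yule_norm (Suc m - card A) * g (card A)) / real m"
    using yule_sum_decompose[of S f] S pairs by simp
  also have "\<dots> = (\<Sum>k=1..m. real (m choose (k - 1)) * yule_norm k * yule_norm (Suc m - k) * g k) / real m"
    using sum_Splits_by_card[OF S(1,2), of "\<lambda>k. yule_norm k * yule_norm (Suc m - k) * g k"]
    by (simp add: mult.assoc)
  also have "\<dots> = (\<Sum>k=1..m. yule_norm (Suc m) * (2 * real k / real (Suc m)) * g k) / real m"
  proof (intro arg_cong[where f="\<lambda>x. x / real m"] sum.cong refl)
    fix k assume "k \<in> {1..m}"
    then show "real (m choose (k - 1)) * yule_norm k * yule_norm (Suc m - k) * g k
             = yule_norm (Suc m) * (2 * real k / real (Suc m)) * g k"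
      using yule_norm_split[of k m] by simp
  qed
  also have "\<dots> = yule_norm (Suc m) * (2 / (real (Suc m) * real m)) * (\<Sum>k=1..m. real k * g k)"
    by (simp add: sum_distrib_left sum_divide_distrib field_simps)
  finally show ?thesis .
qed

lemma pair_sums_split:
  assumes S: "finite S" and A: "A \<in> Splits S"
  defines "P f \<equiv> (\<Sum>l\<in>BTs A. \<Sum>r\<in>BTs (S - A). int_prod l * int_prod r * f (Node l r))"
  defines "Y0 X \<equiv> yule_sum (\<lambda>_. 1) X"
    and "Y1 X \<equiv> yule_sum (\<lambda>t. real (sackin t)) X"
    and "Y2 X \<equiv> yule_sum (\<lambda>t. real (pair_dist t)) X"
  shows "P (\<lambda>_. 1) = Y0 A * Y0 (S - A)"
    and "P (\<lambda>t. real (sackin t))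
         = Y1 A * Y0 (S - A) + Y0 A * Y1 (S - A) + real (card S) * (Y0 A * Y0 (S - A))"
    and "P (\<lambda>t. real (pair_dist t))
         = Y2 A * Y0 (S - A) + Y0 A * Y2 (S - A)
           + 2 * real (card (S - A)) * (Y1 A * Y0 (S - A))
           + 2 * real (card A) * (Y0 A * Y1 (S - A))
           + 4 * real (card A) * real (card (S - A)) * (Y0 A * Y0 (S - A))"
proof -
  have sackin_split: "real (sackin (Node l r)) = real (sackin l) + real (sackin r) + real (card S)"
    and dist_split: "real (pair_dist (Node l r)) = real (pair_dist l) + real (pair_dist r)
        + 2 * real (card (S - A)) * (real (sackin l) + real (card A))
        + 2 * real (card A) * (real (sackin r) + real (card (S - A)))"
    if "l \<in> BTs A" "r \<in> BTs (S - A)" for l r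
  proof -
    have "card A + card (S - A) = card S" "card A \<le> card S"
      using Splits_card[OF S A] by auto
    then show "real (sackin (Node l r)) = real (sackin l) + real (sackin r) + real (card S)"
      using sackin_Node node_over_split[OF S A that] by simp
    show "real (pair_dist (Node l r)) = real (pair_dist l) + real (pair_dist r)
        + 2 * real (card (S - A)) * (real (sackin l) + real (card A))
        + 2 * real (card A) * (real (sackin r) + real (card (S - A)))"
      using pair_dist_Node node_over_split[OF S A that] by simp
  qed
  show "P (\<lambda>_. 1) = Y0 A * Y0 (S - A)"
    unfolding P_def Y0_def yule_sum_def sum_product by simp
  show "P (\<lambda>t. real (sackin t))
         = Y1 A * Y0 (S - A) + Y0 A * Y1 (S - A) + real (card S) * (Y0 A * Y0 (S - A))"
    unfolding P_def Y0_def Y1_def yule_sum_def sum_product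
    unfolding sum_distrib_left sum.distrib[symmetric]
    by (intro sum.cong refl) (simp add: sackin_split algebra_simps)
  show "P (\<lambda>t. real (pair_dist t))
         = Y2 A * Y0 (S - A) + Y0 A * Y2 (S - A)
           + 2 * real (card (S - A)) * (Y1 A * Y0 (S - A))
           + 2 * real (card A) * (Y0 A * Y1 (S - A))
           + 4 * real (card A) * real (card (S - A)) * (Y0 A * Y0 (S - A))"
    unfolding P_def Y0_def Y1_def Y2_def yule_sum_def sum_product
    unfolding sum_distrib_left sum.distrib[symmetric]
    by (intro sum.cong refl) (simp add: dist_split algebra_simps)
qed

section \<open>The Yule moments\<close>

definition yule_moments_closed :: "nat set \<Rightarrow> bool" where
  "yule_moments_closed S \<longleftrightarrow>
     yule_sum (\<lambda>_. 1) S = yule_norm (card S)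
   \<and> yule_sum (\<lambda>t. real (sackin t)) S = yule_norm (card S) * sackin_mean (card S)
   \<and> yule_sum (\<lambda>t. real (pair_dist t)) S = yule_norm (card S) * dist_mean (card S)"

lemma yule_moments_closed_singleton: "yule_moments_closed {a}"
  by (simp add: yule_moments_closed_def yule_sum_def BTs_singleton sackin_def pair_dist_def
      yule_norm_def sackin_mean_def dist_mean_def harm_def)

lemma yule_moments_closedD:
  assumes "yule_moments_closed S"
  shows "yule_sum (\<lambda>_. 1) S = yule_norm (card S)"
    and "yule_sum (\<lambda>t. real (sackin t)) S = yule_norm (card S) * sackin_mean (card S)"
    and "yule_sum (\<lambda>t. real (pair_dist t)) S = yule_norm (card S) * dist_mean (card S)"
  using assms unfolding yule_moments_closed_def by auto

lemma yule_moments_closed_step: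
  assumes S: "finite S" "card S = Suc m" "1 \<le> m"
    and IH: "\<And>A. A \<in> Splits S \<Longrightarrow> yule_moments_closed A \<and> yule_moments_closed (S - A)"
  shows "yule_moments_closed S"
proof -
  let ?c = "yule_norm (Suc m) * (2 / (real (Suc m) * real m))"
  have card_compl: "card (S - A) = Suc m - card A" if "A \<in> Splits S" for A
    using Splits_card[OF S(1) that] S(2) by simp
  note left = yule_moments_closedD[OF conjunct1[OF IH]]
  note right = yule_moments_closedD[OF conjunct2[OF IH]]
  have "real (Suc m) * real m \<noteq> 0" using S(3) by simp
  then have cancel: "?c * (real (Suc m) * real m / 2 * y) = yule_norm (Suc m) * y" for y
    by (simp add: field_simps del: of_nat_Suc)
  have "yule_sum (\<lambda>_. 1) S = ?c * (\<Sum>k=1..m. real k * 1)"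
  proof (rule yule_sum_average[OF S])
    fix A assume A: "A \<in> Splits S"
    show "(\<Sum>l\<in>BTs A. \<Sum>r\<in>BTs (S - A). int_prod l * int_prod r * 1)
          = yule_norm (card A) * yule_norm (Suc m - card A) * 1"
      unfolding pair_sums_split(1)[OF S(1) A] left(1)[OF A] right(1)[OF A] card_compl[OF A] by simp
  qed
  also have "(\<Sum>k=1..m. real k * 1) = real (Suc m) * real m / 2 * 1"
    unfolding mult_1_right sum_id_real by (simp add: algebra_simps)
  also have "?c * \<dots> = yule_norm (Suc m)"
    using cancel[of 1] by simp
  finally have mass: "yule_sum (\<lambda>_. 1) S = yule_norm (Suc m)" .
  have "yule_sum (\<lambda>t. real (sackin t)) S
        = ?c * (\<Sum>k=1..m. real k * (sackin_mean k + sackin_mean (Suc m - k) + real (Suc m)))"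
  proof (rule yule_sum_average[OF S])
    fix A assume A: "A \<in> Splits S"
    show "(\<Sum>l\<in>BTs A. \<Sum>r\<in>BTs (S - A). int_prod l * int_prod r * real (sackin (Node l r)))
          = yule_norm (card A) * yule_norm (Suc m - card A)
            * (sackin_mean (card A) + sackin_mean (Suc m - card A) + real (Suc m))"
      unfolding pair_sums_split(2)[OF S(1) A] left(1,2)[OF A] right(1,2)[OF A] card_compl[OF A] S(2)
      by (simp add: algebra_simps)
  qed
  also have "\<dots> = yule_norm (Suc m) * sackin_mean (Suc m)"
    unfolding sackin_mean_recurrence by (rule cancel)
  finally have sackin_sum: "yule_sum (\<lambda>t. real (sackin t)) S = yule_norm (Suc m) * sackin_mean (Suc m)" .
  have "yule_sum (\<lambda>t. real (pair_dist t)) S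
        = ?c * (\<Sum>k=1..m. real k * (dist_mean k + dist_mean (Suc m - k)
            + 2 * real (Suc m - k) * sackin_mean k + 2 * real k * sackin_mean (Suc m - k)
            + 4 * real k * real (Suc m - k)))"
  proof (rule yule_sum_average[OF S])
    fix A assume A: "A \<in> Splits S"
    show "(\<Sum>l\<in>BTs A. \<Sum>r\<in>BTs (S - A). int_prod l * int_prod r * real (pair_dist (Node l r)))
          = yule_norm (card A) * yule_norm (Suc m - card A)
            * (dist_mean (card A) + dist_mean (Suc m - card A)
               + 2 * real (Suc m - card A) * sackin_mean (card A)
               + 2 * real (card A) * sackin_mean (Suc m - card A)
               + 4 * real (card A) * real (Suc m - card A))"
      unfolding pair_sums_split(3)[OF S(1) A] left[OF A] right[OF A] card_compl[OF A]
      by (simp add: algebra_simps)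
  qed
  also have "\<dots> = yule_norm (Suc m) * dist_mean (Suc m)"
    unfolding dist_mean_recurrence by (rule cancel)
  finally show ?thesis
    using mass sackin_sum S(2) by (simp add: yule_moments_closed_def)
qed

lemma yule_moments:
  assumes "finite S" "S \<noteq> {}"
  shows "yule_moments_closed S"
  using assms
proof (induction "card S" arbitrary: S rule: less_induct)
  case less
  show ?case
  proof (cases "card S = 1")
    case True
    then show ?thesis by (auto simp: card_1_singleton_iff yule_moments_closed_singleton)
  next
    case False
    then obtain m where m: "card S = Suc m" "1 \<le> m"
      using less.prems by (cases "card S") (auto simp: card_gt_0_iff)
    have "yule_moments_closed A \<and> yule_moments_closed (S - A)" if A: "A \<in> Splits S" for A
    proof -
      note card_A = Splits_card[OF less.prems(1) A]
      have "A \<noteq> {}" "S - A \<noteq> {}" "card (S - A) < card S"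
        using card_A card_mono[of A S] by auto
      then show ?thesis
        using less.hyps[of A] less.hyps[of "S - A"] card_A less.prems(1) by simp
    qed
    then show ?thesis using yule_moments_closed_step[OF less.prems(1) m] by blast
  qed
qed

section \<open>Total area and the main theorem\<close>

lemma sum_square_symmetric:
  fixes f :: "nat \<Rightarrow> nat \<Rightarrow> real"
  assumes "\<And>i j. i \<in> {1..N} \<Longrightarrow> j \<in> {1..N} \<Longrightarrow> f i j = f j i"
    and "\<And>i. i \<in> {1..N} \<Longrightarrow> f i i = 0"
  shows "(\<Sum>i\<in>{1..N}. \<Sum>j\<in>{1..N}. f i j) = 2 * (\<Sum>i\<in>{1..N}. \<Sum>j\<in>{i<..N}. f i j)"
  using assms
proof (induction N)
  case (Suc N)
  have IH: "(\<Sum>i\<in>{1..N}. \<Sum>j\<in>{1..N}. f i j) = 2 * (\<Sum>i\<in>{1..N}. \<Sum>j\<in>{i<..N}. f i j)"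
    using Suc.prems by (intro Suc.IH) auto
  have upper: "{i<..Suc N} = insert (Suc N) {i<..N}" if "i \<in> {1..N}" for i
    using that by auto
  have "(\<Sum>i\<in>{1..Suc N}. \<Sum>j\<in>{1..Suc N}. f i j)
      = (\<Sum>i\<in>{1..N}. \<Sum>j\<in>{1..N}. f i j) + (\<Sum>i\<in>{1..N}. f i (Suc N))
        + (\<Sum>j\<in>{1..N}. f (Suc N) j) + f (Suc N) (Suc N)"
    by (simp add: sum.distrib)
  also have "(\<Sum>j\<in>{1..N}. f (Suc N) j) = (\<Sum>i\<in>{1..N}. f i (Suc N))"
    using Suc.prems(1) by (intro sum.cong) auto
  also have "f (Suc N) (Suc N) = 0" using Suc.prems(2) by simp
  also have "(\<Sum>i\<in>{1..N}. \<Sum>j\<in>{i<..Suc N}. f i j)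
           = (\<Sum>i\<in>{1..N}. (\<Sum>j\<in>{i<..N}. f i j) + f i (Suc N))"
    by (intro sum.cong refl) (simp add: upper)
  ultimately show ?case using IH by (simp add: sum.distrib algebra_simps)
qed simp

lemma nodal_dist_sym: "nodal_dist t i j = nodal_dist t j i"
  by (induction t) auto

lemma nodal_dist_self: "i \<in> set (leaves t) \<Longrightarrow> nodal_dist t i i = 0"
  by (induction t) auto

text \<open>The total area counts each unordered pair once.\<close>
lemma total_area_pair_dist:
  assumes "t \<in> BTs {1..N}"
  shows "total_area N t = real (pair_dist t) / 2"
proof -
  have leaves_t: "set (leaves t) = {1..N}" using assms by (simp add: BTs_def)
  have "real (pair_dist t) = (\<Sum>i\<in>{1..N}. \<Sum>j\<in>{1..N}. real (nodal_dist t i j))"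
    by (simp add: pair_dist_def leaves_t)
  also have "\<dots> = 2 * total_area N t"
    unfolding total_area_def
    by (rule sum_square_symmetric) (auto simp: nodal_dist_sym nodal_dist_self leaves_t)
  finally show ?thesis by simp
qed

theorem mainTheorem16:
  fixes n :: nat
  assumes "n \<ge> 2"
  shows "expected_area_yule n =
    2 * real n * (real n + 1) * (\<Sum>i=2..n. 1 / real i) - 2 * real n * (real n - 1)"
proof -
  have moments: "yule_moments_closed {1..n}"
    using assms by (intro yule_moments) auto
  have "expected_area_yule n
        = (\<Sum>t\<in>BTs {1..n}. int_prod t * real (pair_dist t)) / (2 * yule_norm n)"
    unfolding expected_area_yule_def BT_def BTs_def[symmetric] sum_divide_distrib
    by (intro sum.cong refl) (simp add: total_area_pair_dist yule_prob_def yule_norm_def field_simps)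
  also have "\<dots> = dist_mean n / 2"
    using yule_moments_closedD(3)[OF moments] by (simp add: yule_sum_def yule_norm_def)
  finally have area: "expected_area_yule n = dist_mean n / 2" .
  have "{1..n} = insert 1 {2..n}" using assms by auto
  then have harm_n: "harm n = 1 + (\<Sum>i=2..n. 1 / real i)"
    by (simp add: harm_def inverse_eq_divide)
  show ?thesis
    unfolding area dist_mean_def harm_n by (simp add: field_simps power2_eq_square)
qed

end
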